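(* For every graph $G$ and every positive integer $\alpha$, $\mathrm{tw}(G)\le 5\,\mathrm{ecrw}(G)-1$ and $\mathrm{tw}(G)\le 3\,\mathrm{ecrw}_\alpha(G)+2\alpha-1$.
   Context: A tree-cut decomposition of a graph $G$ is a pair $\mathcal{T}=(T,\{X_t\}_{t\in V(T)})$ where $T$ is a tree and the bags $X_t\subseteq V(G)$ are pairwise disjoint (possibly empty) with $\bigcup_{t\in V(T)}X_t=V(G)$. For a node $t$ of $T$, let $T_1,\dots,T_m$ be the connected components of $T-t$ and $Z_i=\bigcup_{s\in V(T_i)}X_s$; $\mathrm{cross}_{\mathcal{T}}(t)$ is the number of edges of $G$ whose two endpoints lie in two distinct sets among $Z_1,\dots,Z_m$ (if $T$ has one node, $\mathrm{cross}_{\mathcal T}(t)=0$). The crossing number of $\mathcal{T}$ is $\max_{t}\mathrm{cross}_{\mathcal{T}}(t)$, and the thickness of $\mathcal{T}$ is $\max_t|X_t|$. $\mathrm{ecrw}_\alpha(G)$ is the minimum crossing number over tree-cut decompositions of $G$ of thickness at most $\alpha$. The edge-crossing width of $\mathcal T$ is the maximum of its crossing number and its thickness, and $\mathrm{ecrw}(G)$ is the minimum edge-crossing width over all tree-cut decompositions of $G$. $\mathrm{tw}(G)$ denotes tree-width. *)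

theory Defs
  imports Main
begin

definition graph :: "'a set \<Rightarrow> 'a set set \<Rightarrow> bool" where
  "graph V E \<longleftrightarrow> finite V \<and> (\<forall>e\<in>E. \<exists>u v. e = {u, v} \<and> u \<noteq> v \<and> u \<in> V \<and> v \<in> V)"

definition adj_in :: "'b set set \<Rightarrow> 'b set \<Rightarrow> 'b \<Rightarrow> 'b \<Rightarrow> bool" where
  "adj_in F S x y \<longleftrightarrow> {x, y} \<in> F \<and> x \<in> S \<and> y \<in> S"

definition connected_in :: "'b set set \<Rightarrow> 'b set \<Rightarrow> bool" where
  "connected_in F S \<longleftrightarrow> (\<forall>x\<in>S. \<forall>y\<in>S. (adj_in F S)\<^sup>*\<^sup>* x y)"

definition is_tree :: "'b set \<Rightarrow> 'b set set \<Rightarrow> bool" where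
  "is_tree N F \<longleftrightarrow> graph N F \<and> N \<noteq> {} \<and> connected_in F N \<and> card F = card N - 1"

definition tree_decomp :: "'a set \<Rightarrow> 'a set set \<Rightarrow> nat set \<Rightarrow> nat set set \<Rightarrow> (nat \<Rightarrow> 'a set) \<Rightarrow> bool" where
  "tree_decomp V E N F B \<longleftrightarrow> is_tree N F
     \<and> (\<forall>t\<in>N. B t \<subseteq> V)
     \<and> (\<forall>v\<in>V. \<exists>t\<in>N. v \<in> B t)
     \<and> (\<forall>e\<in>E. \<exists>t\<in>N. e \<subseteq> B t)
     \<and> (\<forall>v\<in>V. connected_in F {t\<in>N. v \<in> B t})"

definition td_width :: "nat set \<Rightarrow> (nat \<Rightarrow> 'a set) \<Rightarrow> int" where
  "td_width N B = int (Max ((\<lambda>t. card (B t)) ` N)) - 1"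

definition treewidth :: "'a set \<Rightarrow> 'a set set \<Rightarrow> int" where
  "treewidth V E = Inf {td_width N B | N F B. tree_decomp V E N F B}"

definition tree_cut_decomp :: "'a set \<Rightarrow> 'a set set \<Rightarrow> nat set \<Rightarrow> nat set set \<Rightarrow> (nat \<Rightarrow> 'a set) \<Rightarrow> bool" where
  "tree_cut_decomp V E N F X \<longleftrightarrow> is_tree N F
     \<and> (\<forall>s\<in>N. \<forall>t\<in>N. s \<noteq> t \<longrightarrow> X s \<inter> X t = {})
     \<and> (\<Union>t\<in>N. X t) = V"

definition same_comp :: "nat set \<Rightarrow> nat set set \<Rightarrow> nat \<Rightarrow> nat \<Rightarrow> nat \<Rightarrow> bool" where
  "same_comp N F t s s' \<longleftrightarrow> (adj_in F (N - {t}))\<^sup>*\<^sup>* s s'"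

definition cross :: "'a set set \<Rightarrow> nat set \<Rightarrow> nat set set \<Rightarrow> (nat \<Rightarrow> 'a set) \<Rightarrow> nat \<Rightarrow> nat" where
  "cross E N F X t = card {e\<in>E. \<exists>u v s s'. e = {u, v} \<and> s \<in> N - {t} \<and> s' \<in> N - {t}
      \<and> u \<in> X s \<and> v \<in> X s' \<and> \<not> same_comp N F t s s'}"

definition crossing_number :: "'a set set \<Rightarrow> nat set \<Rightarrow> nat set set \<Rightarrow> (nat \<Rightarrow> 'a set) \<Rightarrow> nat" where
  "crossing_number E N F X = Max (cross E N F X ` N)"

definition thickness :: "nat set \<Rightarrow> (nat \<Rightarrow> 'a set) \<Rightarrow> nat" where
  "thickness N X = Max ((\<lambda>t. card (X t)) ` N)"

definition ecrw_alpha :: "nat \<Rightarrow> 'a set \<Rightarrow> 'a set set \<Rightarrow> nat" where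
  "ecrw_alpha \<alpha> V E = Inf {crossing_number E N F X | N F X.
       tree_cut_decomp V E N F X \<and> thickness N X \<le> \<alpha>}"

definition ecrw :: "'a set \<Rightarrow> 'a set set \<Rightarrow> nat" where
  "ecrw V E = Inf {max (crossing_number E N F X) (thickness N X) | N F X.
       tree_cut_decomp V E N F X}"

end

theory Submission
  imports Defs
begin

text \<open>Root the tree of a tree-cut decomposition \<open>(T, X)\<close>. Keeping the tree, give node \<open>t\<close>
  the bag consisting of \<open>X t\<close>, the endpoints of all edges crossing \<open>t\<close>, and the vertices
  outside the subtree of \<open>t\<close> with a neighbour in \<open>X t\<close>. This is a tree decomposition, and
  its bag at \<open>t\<close> lies in \<open>X t \<union> X (parent t)\<close> plus both endpoints of every edge crossing
  \<open>t\<close> plus one endpoint of every edge crossing the parent, so it has at most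
  \<open>2 \<cdot> thickness + 3 \<cdot> crossing number\<close> vertices. Both bounds follow by applying this to an
  optimal decomposition.\<close>

lemma graph_edges_subset_Pow: "graph V E \<Longrightarrow> E \<subseteq> Pow V"
  unfolding graph_def by fastforce

lemma graph_finite_edges: "graph V E \<Longrightarrow> finite E"
  using graph_edges_subset_Pow finite_Pow_iff finite_subset unfolding graph_def by metis

lemma graph_edgeD:
  assumes "graph V E" and "{u, v} \<in> E"
  shows "u \<in> V \<and> v \<in> V \<and> u \<noteq> v"
proof -
  obtain x y where xy: "{u, v} = {x, y}" "x \<noteq> y" "x \<in> V" "y \<in> V"
    using assms unfolding graph_def by blast
  then show ?thesis by (auto simp: doubleton_eq_iff)
qed

lemma card_Union_graph_edges_le:
  assumes "graph V E" and "C \<subseteq> E"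
  shows "card (\<Union>C) \<le> 2 * card C"
proof -
  have "card (\<Union>C) \<le> sum card C" by (rule card_Union_le_sum_card)
  also have "\<dots> \<le> of_nat (card C) * 2"
  proof (rule sum_bounded_above)
    fix e assume "e \<in> C"
    then obtain x y where "e = {x, y}" using assms unfolding graph_def by blast
    then show "card e \<le> 2" by (cases "x = y") auto
  qed
  finally show ?thesis by simp
qed

lemma connected_in_descent:
  fixes \<mu> :: "'b \<Rightarrow> nat"
  assumes "a \<in> S"
    and descent: "\<And>t. t \<in> S \<Longrightarrow> t \<noteq> a \<Longrightarrow> \<exists>t'\<in>S. {t, t'} \<in> F \<and> \<mu> t' < \<mu> t"
  shows "connected_in F S"
proof -
  have to_a: "(adj_in F S)\<^sup>*\<^sup>* t a \<and> (adj_in F S)\<^sup>*\<^sup>* a t" if "t \<in> S" for t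
    using that
  proof (induction "\<mu> t" arbitrary: t rule: less_induct)
    case less
    show ?case
    proof (cases "t = a")
      case False
      then obtain t' where t': "t' \<in> S" "{t, t'} \<in> F" "\<mu> t' < \<mu> t"
        using descent less.prems by blast
      have "adj_in F S t t'" "adj_in F S t' t"
        using t' less.prems unfolding adj_in_def by (auto simp: insert_commute)
      with less.hyps[OF t'(3) t'(1)] show ?thesis
        by (meson converse_rtranclp_into_rtranclp rtranclp.rtrancl_into_rtrancl)
    qed simp
  qed
  show ?thesis unfolding connected_in_def using to_a by (meson rtranclp_trans)
qed

locale rooted_tree =
  fixes N :: "nat set" and F :: "nat set set" and r :: nat
  assumes tree: "is_tree N F" and root_in_nodes: "r \<in> N"
begin

definition depth :: "nat \<Rightarrow> nat" where
  "depth x = (LEAST n. (adj_in F N ^^ n) r x)"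

definition parent :: "nat \<Rightarrow> nat" where
  "parent x = (if x = r then r else (SOME y. adj_in F N y x \<and> Suc (depth y) = depth x))"

definition ancestor :: "nat \<Rightarrow> nat \<Rightarrow> bool" where
  "ancestor t x \<longleftrightarrow> (\<exists>k. (parent ^^ k) x = t)"

definition child_towards :: "nat \<Rightarrow> nat \<Rightarrow> nat" where
  "child_towards t x = (parent ^^ (depth x - depth t - 1)) x"

text \<open>The components of \<open>T - t\<close> are the subtrees of the children of \<open>t\<close>, labelled by
  the child, and the rest of the tree, labelled \<open>None\<close>.\<close>
definition branch :: "nat \<Rightarrow> nat \<Rightarrow> nat option" where
  "branch t x = (if ancestor t x \<and> x \<noteq> t then Some (child_towards t x) else None)"

lemma finite_nodes: "finite N"
  using tree unfolding is_tree_def graph_def by blast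

lemma finite_tree_edges: "finite F"
  using tree graph_finite_edges unfolding is_tree_def by blast

lemma adj_in_nodes: "adj_in F N x y \<Longrightarrow> x \<in> N \<and> y \<in> N"
  unfolding adj_in_def by simp

lemma depth_path: "x \<in> N \<Longrightarrow> (adj_in F N ^^ depth x) r x"
proof -
  assume "x \<in> N"
  hence "(adj_in F N)\<^sup>*\<^sup>* r x"
    using tree root_in_nodes unfolding is_tree_def connected_in_def by blast
  then obtain n where "(adj_in F N ^^ n) r x" using rtranclp_imp_relpowp by metis
  thus ?thesis unfolding depth_def by (rule LeastI)
qed

lemma depth_le: "(adj_in F N ^^ n) r x \<Longrightarrow> depth x \<le> n"
  unfolding depth_def by (rule Least_le)

lemma depth_root: "depth r = 0"
  using depth_le[of 0 r] by simp

lemma depth_eq_0_imp_root: "x \<in> N \<Longrightarrow> depth x = 0 \<Longrightarrow> x = r"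
  using depth_path by fastforce

lemma parent_adj_depth:
  assumes x: "x \<in> N" "x \<noteq> r"
  shows "adj_in F N (parent x) x \<and> Suc (depth (parent x)) = depth x"
proof -
  obtain m where m: "depth x = Suc m"
    using x depth_eq_0_imp_root by (cases "depth x") auto
  then have "(adj_in F N ^^ Suc m) r x" using depth_path x by metis
  then obtain y where y: "(adj_in F N ^^ m) r y" "adj_in F N y x" by (rule relpowp_Suc_E)
  have "depth y \<le> m" using y(1) by (rule depth_le)
  moreover have "(adj_in F N ^^ Suc (depth y)) r x"
    using depth_path[of y] adj_in_nodes[OF y(2)] y(2) by auto
  then have "depth x \<le> Suc (depth y)" by (rule depth_le)
  ultimately have "adj_in F N y x \<and> Suc (depth y) = depth x" using m y by simp
  then have "adj_in F N (SOME y. adj_in F N y x \<and> Suc (depth y) = depth x) x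
      \<and> Suc (depth (SOME y. adj_in F N y x \<and> Suc (depth y) = depth x)) = depth x"
    by (rule someI)
  then show ?thesis using x unfolding parent_def by simp
qed

lemma parent_in_nodes: "x \<in> N \<Longrightarrow> parent x \<in> N"
  using parent_adj_depth adj_in_nodes by (cases "x = r") (auto simp: parent_def)

lemma depth_parent: "x \<in> N \<Longrightarrow> x \<noteq> r \<Longrightarrow> Suc (depth (parent x)) = depth x"
  using parent_adj_depth by blast

lemma parent_neq: "x \<in> N \<Longrightarrow> x \<noteq> r \<Longrightarrow> parent x \<noteq> x"
  using depth_parent by fastforce

lemma parent_edge: "x \<in> N \<Longrightarrow> x \<noteq> r \<Longrightarrow> {x, parent x} \<in> F"
  using parent_adj_depth unfolding adj_in_def by (simp add: insert_commute)

lemma parent_root: "parent r = r"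
  unfolding parent_def by simp

text \<open>The \<open>|N| - 1\<close> parent edges are distinct, so by the edge count of a tree they are all
  the edges.\<close>
lemma tree_edge_parent: "e \<in> F \<Longrightarrow> \<exists>x\<in>N - {r}. e = {x, parent x}"
proof -
  assume e: "e \<in> F"
  define g where "g x = {x, parent x}" for x
  have "inj_on g (N - {r})"
  proof (rule inj_onI)
    fix x y assume xy: "x \<in> N - {r}" "y \<in> N - {r}" "g x = g y"
    show "x = y"
    proof (rule ccontr)
      assume "x \<noteq> y"
      with xy(3) have "x = parent y" "parent x = y" unfolding g_def doubleton_eq_iff by blast+
      then show False using depth_parent xy(1,2) by (metis DiffE Suc_n_not_le_n le_Suc_eq singletonI)
    qed
  qed
  then have "card (g ` (N - {r})) = card F"
    using card_image root_in_nodes finite_nodes tree unfolding is_tree_def by fastforce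
  moreover have "g ` (N - {r}) \<subseteq> F" using parent_edge unfolding g_def by blast
  ultimately have "g ` (N - {r}) = F" using card_subset_eq[OF finite_tree_edges] by blast
  then show ?thesis using e unfolding g_def by blast
qed

lemma adj_parent_cases:
  "adj_in F N x y \<Longrightarrow> (x \<noteq> r \<and> y = parent x) \<or> (y \<noteq> r \<and> x = parent y)"
  using tree_edge_parent unfolding adj_in_def by (fastforce simp: doubleton_eq_iff)

lemma funpow_parent_in_nodes: "x \<in> N \<Longrightarrow> (parent ^^ k) x \<in> N"
  by (induction k) (auto simp: parent_in_nodes)

lemma funpow_parent_root: "(parent ^^ k) r = r"
  by (induction k) (auto simp: parent_root)

lemma depth_funpow_parent: "x \<in> N \<Longrightarrow> k \<le> depth x \<Longrightarrow> depth ((parent ^^ k) x) = depth x - k"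
proof (induction k)
  case (Suc k)
  then have IH: "depth ((parent ^^ k) x) = depth x - k" by simp
  moreover have "(parent ^^ k) x \<noteq> r" using IH Suc.prems(2) depth_root by auto
  ultimately show ?case
    using depth_parent[OF funpow_parent_in_nodes[OF Suc.prems(1)]] Suc.prems(2) by fastforce
qed simp

lemma funpow_parent_depth: "x \<in> N \<Longrightarrow> (parent ^^ depth x) x = r"
  using depth_funpow_parent[of x "depth x"] depth_eq_0_imp_root funpow_parent_in_nodes by simp

lemma ancestor_depth:
  assumes x: "x \<in> N" and "ancestor t x"
  shows "depth t \<le> depth x \<and> t = (parent ^^ (depth x - depth t)) x"
proof -
  obtain k where k: "(parent ^^ k) x = t" using \<open>ancestor t x\<close> unfolding ancestor_def by blast
  show ?thesis
  proof (cases "k \<le> depth x")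
    case True
    then show ?thesis using depth_funpow_parent x k by force
  next
    case False
    then have "(parent ^^ k) x = (parent ^^ (k - depth x)) ((parent ^^ depth x) x)"
      by (metis funpow_add comp_apply le_add_diff_inverse2 nat_le_linear)
    then have "t = r" using k funpow_parent_depth x funpow_parent_root by simp
    then show ?thesis using depth_root funpow_parent_depth x by simp
  qed
qed

lemma ancestor_in_nodes: "x \<in> N \<Longrightarrow> ancestor t x \<Longrightarrow> t \<in> N"
  unfolding ancestor_def using funpow_parent_in_nodes by blast

lemma ancestor_refl: "ancestor x x"
  unfolding ancestor_def by (metis funpow_0)

lemma root_ancestor: "x \<in> N \<Longrightarrow> ancestor r x"
  unfolding ancestor_def using funpow_parent_depth by blast

lemma ancestor_trans: "ancestor t x \<Longrightarrow> ancestor x y \<Longrightarrow> ancestor t y"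
  unfolding ancestor_def by (metis funpow_add o_apply)

lemma parent_ancestor: "ancestor (parent x) x"
  unfolding ancestor_def by (rule exI[of _ 1]) simp

lemma ancestor_antisym: "x \<in> N \<Longrightarrow> ancestor t x \<Longrightarrow> ancestor x t \<Longrightarrow> t = x"
  by (metis ancestor_depth ancestor_in_nodes le_antisym diff_self_eq_0 funpow_0)

lemma ancestor_of_parent: "ancestor t x \<Longrightarrow> t \<noteq> x \<Longrightarrow> ancestor t (parent x)"
proof -
  assume "ancestor t x" "t \<noteq> x"
  then obtain j where "(parent ^^ Suc j) x = t" unfolding ancestor_def
    by (metis funpow_0 not0_implies_Suc)
  then have "(parent ^^ j) (parent x) = t" by (simp add: funpow_Suc_right del: funpow.simps)
  then show ?thesis unfolding ancestor_def by blast
qed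

lemma child_towards:
  assumes x: "x \<in> N" and a: "ancestor t x" and ne: "t \<noteq> x"
  shows "child_towards t x \<in> N \<and> ancestor (child_towards t x) x \<and> child_towards t x \<noteq> r
    \<and> parent (child_towards t x) = t \<and> depth (child_towards t x) = Suc (depth t)"
proof -
  have f: "depth t \<le> depth x" "t = (parent ^^ (depth x - depth t)) x"
    using ancestor_depth x a by blast+
  have lt: "depth t < depth x" using f ne by (metis diff_self_eq_0 funpow_0 le_neq_implies_less)
  define c where "c = child_towards t x"
  have c: "c = (parent ^^ (depth x - depth t - 1)) x" unfolding c_def child_towards_def ..
  have dc: "depth c = Suc (depth t)" using c depth_funpow_parent[of x "depth x - depth t - 1"] x lt
    by simp
  have "parent c = (parent ^^ Suc (depth x - depth t - 1)) x" using c by simp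
  also have "Suc (depth x - depth t - 1) = depth x - depth t" using lt by simp
  finally have "parent c = t" using f by simp
  moreover have "c \<in> N" "ancestor c x" using c funpow_parent_in_nodes x unfolding ancestor_def
    by blast+
  ultimately show ?thesis using dc depth_root by (auto simp: c_def)
qed

lemma child_towards_unique:
  assumes "x \<in> N" "c \<in> N" "c \<noteq> r" "ancestor c x" "parent c = t"
  shows "child_towards t x = c"
proof -
  have "Suc (depth t) = depth c" using depth_parent assms by blast
  moreover have "c = (parent ^^ (depth x - depth c)) x" using ancestor_depth assms by blast
  ultimately show ?thesis unfolding child_towards_def by simp
qed

lemma branch_parent_step:
  assumes y: "y \<in> N" "y \<noteq> r" "y \<noteq> t" "parent y \<noteq> t"
  shows "branch t y = branch t (parent y)"
proof (cases "ancestor t y")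
  case True
  have c: "child_towards t y \<in> N" "ancestor (child_towards t y) y" "child_towards t y \<noteq> r"
    "parent (child_towards t y) = t"
    using child_towards y True by blast+
  then have "child_towards t y \<noteq> y" using y(4) by metis
  then have "ancestor (child_towards t y) (parent y)" using ancestor_of_parent c by blast
  then have "child_towards t (parent y) = child_towards t y"
    using child_towards_unique c parent_in_nodes y(1) by blast
  then show ?thesis unfolding branch_def using True ancestor_of_parent y by simp
next
  case False
  then have "\<not> ancestor t (parent y)" using ancestor_trans parent_ancestor by blast
  then show ?thesis unfolding branch_def using False by simp
qed

lemma same_comp_branch:
  assumes "x \<in> N - {t}" and "same_comp N F t x y"
  shows "branch t x = branch t y"
  using assms(2) unfolding same_comp_def
proof (induction rule: rtranclp_induct)
  case (step y z)
  have yz: "y \<in> N" "z \<in> N" "y \<noteq> t" "z \<noteq> t" "adj_in F N y z"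
    using step(2) unfolding adj_in_def by auto
  from adj_parent_cases[OF yz(5)] have "branch t y = branch t z"
    using branch_parent_step yz by fastforce
  then show ?case using step.IH by simp
qed simp

lemma branch_parent_of_descendant:
  assumes t: "t \<in> N" "t \<noteq> r" and b: "b \<in> N" "ancestor t b"
  shows "branch (parent t) b = Some t"
proof -
  have "b \<noteq> parent t"
    using ancestor_antisym[of t "parent t"] b parent_ancestor t parent_in_nodes parent_neq by metis
  moreover have "child_towards (parent t) b = t" using child_towards_unique b t by blast
  ultimately show ?thesis
    unfolding branch_def using ancestor_trans[OF parent_ancestor b(2)] by simp
qed

lemma branch_parent_of_non_descendant:
  assumes "x \<in> N" "\<not> ancestor t x"
  shows "branch (parent t) x \<noteq> Some t"
  using assms child_towards[of x "parent t"] unfolding branch_def by (auto split: if_splits)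

end

locale rooted_tree_cut = rooted_tree N F r
  for N :: "nat set" and F :: "nat set set" and r :: nat +
  fixes V :: "'a set" and E :: "'a set set" and X :: "nat \<Rightarrow> 'a set"
  assumes graph: "graph V E" and decomp: "tree_cut_decomp V E N F X"
begin

definition home :: "'a \<Rightarrow> nat" where
  "home u = (THE s. s \<in> N \<and> u \<in> X s)"

definition crossing :: "nat \<Rightarrow> 'a set set" where
  "crossing t = {e\<in>E. \<exists>u v s s'. e = {u, v} \<and> s \<in> N - {t} \<and> s' \<in> N - {t}
      \<and> u \<in> X s \<and> v \<in> X s' \<and> \<not> same_comp N F t s s'}"

definition bag :: "nat \<Rightarrow> 'a set" where
  "bag t = {u \<in> V. home u = t \<or> (\<exists>v. {u, v} \<in> E \<and> home u \<noteq> t \<and>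
      ((home v \<noteq> t \<and> branch t (home u) \<noteq> branch t (home v))
       \<or> (home v = t \<and> \<not> ancestor t (home u))))}"

definition outside_neighbours :: "nat \<Rightarrow> 'a set" where
  "outside_neighbours t = {u \<in> V. \<exists>v\<in>X t. {u, v} \<in> crossing (parent t) \<and> u \<notin> X t}"

lemma finite_vertices: "finite V"
  using graph unfolding graph_def by blast

lemma home_eq: "s \<in> N \<Longrightarrow> u \<in> X s \<Longrightarrow> home u = s"
  using decomp unfolding home_def tree_cut_decomp_def by (intro the_equality) blast+

lemma home_in_nodes: "u \<in> V \<Longrightarrow> home u \<in> N \<and> u \<in> X (home u)"
  using decomp home_eq unfolding tree_cut_decomp_def by fastforce

lemma bag_subset_vertices: "bag t \<subseteq> V"
  unfolding bag_def by blast

lemma home_in_bag: "u \<in> V \<Longrightarrow> u \<in> bag (home u)"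
  unfolding bag_def by blast

lemma bags_cover_edge:
  assumes "e \<in> E"
  shows "\<exists>t\<in>N. e \<subseteq> bag t"
proof -
  obtain u v where uv: "e = {u, v}" "u \<in> V" "v \<in> V"
    using graph assms unfolding graph_def by blast
  have nodes: "home u \<in> N" "home v \<in> N" and own: "u \<in> bag (home u)" "v \<in> bag (home v)"
    using home_in_nodes home_in_bag uv by blast+
  consider "home u = home v" | "home u \<noteq> home v" "\<not> ancestor (home v) (home u)"
    | "home u \<noteq> home v" "\<not> ancestor (home u) (home v)"
    using ancestor_antisym nodes by blast
  then show ?thesis
  proof cases
    case 1
    then show ?thesis using own nodes uv by auto
  next
    case 2
    then have "u \<in> bag (home v)" unfolding bag_def using assms uv by blast
    then show ?thesis using own nodes uv by auto
  next
    case 3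
    then have "v \<in> bag (home u)"
      unfolding bag_def using assms uv by (auto simp: insert_commute)
    then show ?thesis using own nodes uv by auto
  qed
qed

lemma bag_parent_step:
  assumes u: "u \<in> V" "u \<in> bag t" and t: "t \<in> N" and up: "\<not> ancestor t (home u)"
  shows "u \<in> bag (parent t)"
proof -
  define a where "a = home u"
  have a: "a \<in> N" using home_in_nodes u a_def by blast
  have tr: "t \<noteq> r" using up root_ancestor a a_def by blast
  obtain v where v: "{u, v} \<in> E" and
    vcl: "(home v \<noteq> t \<and> branch t a \<noteq> branch t (home v)) \<or> home v = t"
    using u up ancestor_refl unfolding bag_def a_def by blast
  define b where "b = home v"
  have b: "b \<in> N" using home_in_nodes graph_edgeD[OF graph v] b_def by blast
  show ?thesis
  proof (cases "parent t = a")
    case True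
    then show ?thesis using home_in_bag u a_def by simp
  next
    case pa: False
    have "ancestor t b"
    proof (cases "b = t")
      case False
      moreover have "branch t a = None" unfolding branch_def using up a_def by simp
      ultimately show ?thesis using vcl b_def unfolding branch_def by (auto split: if_splits)
    qed (simp add: ancestor_refl)
    then have "branch (parent t) b = Some t" "b \<noteq> parent t"
      using branch_parent_of_descendant[OF t tr b]
        ancestor_antisym[OF parent_in_nodes[OF t] _ parent_ancestor] parent_neq[OF t tr] by auto
    moreover have "branch (parent t) a \<noteq> Some t"
      using branch_parent_of_non_descendant a up a_def by blast
    ultimately show ?thesis unfolding bag_def using u(1) v pa a_def b_def by force
  qed
qed

lemma bag_child_step:
  assumes u: "u \<in> V" "u \<in> bag t" and t: "t \<in> N"
    and down: "ancestor t (home u)" "t \<noteq> home u"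
  shows "u \<in> bag (child_towards t (home u))"
proof -
  define a where "a = home u"
  have a: "a \<in> N" using home_in_nodes u a_def by blast
  define c where "c = child_towards t a"
  have c: "c \<in> N" "ancestor c a" "c \<noteq> r" "parent c = t"
    using child_towards[OF a] down unfolding c_def a_def by blast+
  obtain v where v: "{u, v} \<in> E" and neq: "home v \<noteq> t" "branch t a \<noteq> branch t (home v)"
    using u down unfolding bag_def a_def by blast
  define b where "b = home v"
  have b: "b \<in> N" using home_in_nodes graph_edgeD[OF graph v] b_def by blast
  have cpa: "branch t a = Some c" unfolding branch_def c_def using down a_def by simp
  show ?thesis
  proof (cases "c = a")
    case True
    then show ?thesis using home_in_bag u a_def c_def by simp
  next
    case ca: False
    have "\<not> (ancestor c b)"
    proof
      assume cb: "ancestor c b"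
      have "b \<noteq> t"
        using ancestor_antisym[of c t] cb parent_ancestor[of c] c parent_neq neq(1) b_def by metis
      moreover have "ancestor t b" using ancestor_trans parent_ancestor cb c(4) by metis
      ultimately have "branch t b = Some c"
        unfolding branch_def using child_towards_unique[OF b c(1,3) cb c(4)] by simp
      then show False using neq(2) cpa b_def by simp
    qed
    then have "branch c a \<noteq> branch c b" "b \<noteq> c"
      unfolding branch_def using c(2) ca ancestor_refl by auto
    then show ?thesis unfolding bag_def using u(1) v ca a_def b_def c_def by blast
  qed
qed

text \<open>Walk from any node containing \<open>u\<close> towards \<open>home u\<close>: upwards while outside its
  subtree, then downwards; the measure counts the remaining steps.\<close>
lemma bags_connected:
  assumes u: "u \<in> V"
  shows "connected_in F {t \<in> N. u \<in> bag t}"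
proof -
  define a where "a = home u"
  have a: "a \<in> N" using home_in_nodes u a_def by blast
  define \<mu> where "\<mu> t = (if ancestor t a then depth a - depth t else depth t + depth a + 1)" for t
  show ?thesis
  proof (rule connected_in_descent[where a = a and \<mu> = \<mu>])
    show "a \<in> {t \<in> N. u \<in> bag t}" using home_in_bag u a a_def by blast
  next
    fix t assume tS: "t \<in> {t \<in> N. u \<in> bag t}" and ta: "t \<noteq> a"
    then have t: "t \<in> N" "u \<in> bag t" by blast+
    show "\<exists>t'\<in>{t \<in> N. u \<in> bag t}. {t, t'} \<in> F \<and> \<mu> t' < \<mu> t"
    proof (cases "ancestor t a")
      case False
      have tr: "t \<noteq> r" using False root_ancestor a by blast
      have "\<mu> (parent t) < \<mu> t"
        using depth_parent[OF t(1) tr] False unfolding \<mu>_def by auto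
      then show ?thesis
        using bag_parent_step[OF u t(2) t(1)] False parent_in_nodes t(1) parent_edge tr a_def
        by blast
    next
      case True
      define c where "c = child_towards t a"
      have c: "c \<in> N" "ancestor c a" "c \<noteq> r" "parent c = t" "depth c = Suc (depth t)"
        using child_towards[OF a True ta] unfolding c_def by blast+
      have "\<mu> c < \<mu> t"
        using ancestor_depth[OF a c(2)] True c(2,5) unfolding \<mu>_def by auto
      moreover have "{t, c} \<in> F" using parent_edge[OF c(1) c(3)] c(4) by (simp add: insert_commute)
      ultimately show ?thesis
        using bag_child_step[OF u t(2) t(1)] True ta c(1) a_def c_def by blast
    qed
  qed
qed

lemma tree_decomp_bags: "tree_decomp V E N F bag"
  unfolding tree_decomp_def
proof (intro conjI ballI)
  fix v assume "v \<in> V"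
  then show "\<exists>t\<in>N. v \<in> bag t" using home_in_nodes home_in_bag by blast
qed (use tree bag_subset_vertices bags_cover_edge bags_connected in auto)

lemma edge_to_bag_crosses_parent:
  assumes t: "t \<in> N" and e: "{u, v} \<in> E" and v: "v \<in> X t"
    and u: "s \<in> N" "u \<in> X s" "\<not> ancestor t s" "s \<noteq> parent t"
  shows "{u, v} \<in> crossing (parent t)"
proof -
  have tr: "t \<noteq> r" using u root_ancestor by blast
  have "branch (parent t) t = Some t"
    using branch_parent_of_descendant[OF t tr t ancestor_refl] .
  moreover have "branch (parent t) s \<noteq> Some t"
    using branch_parent_of_non_descendant u by blast
  ultimately have "\<not> same_comp N F (parent t) s t"
    using same_comp_branch[of s "parent t" t] u by auto
  moreover have "t \<noteq> parent t" using parent_neq t tr by metis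
  ultimately show ?thesis unfolding crossing_def using e t u v by auto
qed

lemma bag_subset:
  assumes t: "t \<in> N"
  shows "bag t \<subseteq> X t \<union> \<Union>(crossing t) \<union> X (parent t) \<union> outside_neighbours t"
proof
  fix u assume uB: "u \<in> bag t"
  have uV: "u \<in> V" using uB bag_subset_vertices by blast
  have a: "home u \<in> N" "u \<in> X (home u)" using home_in_nodes uV by blast+
  show "u \<in> X t \<union> \<Union>(crossing t) \<union> X (parent t) \<union> outside_neighbours t"
  proof (cases "home u = t")
    case True then show ?thesis using a by simp
  next
    case False
    obtain v where v: "{u, v} \<in> E" and vcl: "(home v \<noteq> t \<and> branch t (home u) \<noteq> branch t (home v))
        \<or> (home v = t \<and> \<not> ancestor t (home u))"
      using uB False unfolding bag_def by blast
    have b: "home v \<in> N" "v \<in> X (home v)" using home_in_nodes graph_edgeD[OF graph v] by blast+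
    from vcl show ?thesis
    proof
      assume h: "home v \<noteq> t \<and> branch t (home u) \<noteq> branch t (home v)"
      then have "\<not> same_comp N F t (home u) (home v)"
        using same_comp_branch a False by blast
      then have "{u, v} \<in> crossing t" unfolding crossing_def using v a b False h by blast
      then show ?thesis by blast
    next
      assume h: "home v = t \<and> \<not> ancestor t (home u)"
      show ?thesis
      proof (cases "home u = parent t")
        case True then show ?thesis using a by simp
      next
        case False
        then have "{u, v} \<in> crossing (parent t)"
          using edge_to_bag_crosses_parent[OF t v] a b h by auto
        moreover have "u \<notin> X t" using home_eq[OF t] \<open>home u \<noteq> t\<close> by blast
        ultimately show ?thesis unfolding outside_neighbours_def using uV b h by auto
      qed
    qed
  qed
qed

lemma card_outside_neighbours_le: "card (outside_neighbours t) \<le> card (crossing (parent t))"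
proof -
  have "\<forall>u\<in>outside_neighbours t. \<exists>v. v \<in> X t \<and> {u, v} \<in> crossing (parent t)"
    unfolding outside_neighbours_def by blast
  then obtain g where g: "\<And>u. u \<in> outside_neighbours t
      \<Longrightarrow> g u \<in> X t \<and> {u, g u} \<in> crossing (parent t)"
    by (metis bchoice)
  have "inj_on (\<lambda>u. {u, g u}) (outside_neighbours t)"
  proof (rule inj_onI)
    fix u1 u2 assume u: "u1 \<in> outside_neighbours t" "u2 \<in> outside_neighbours t"
      and eq: "{u1, g u1} = {u2, g u2}"
    then have "u1 \<notin> X t" "u2 \<notin> X t" "g u2 \<in> X t" using g unfolding outside_neighbours_def by auto
    with eq show "u1 = u2" by (auto simp: doubleton_eq_iff)
  qed
  moreover have "(\<lambda>u. {u, g u}) ` outside_neighbours t \<subseteq> crossing (parent t)" using g by blast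
  moreover have "finite (crossing (parent t))"
    using graph_finite_edges[OF graph] unfolding crossing_def by simp
  ultimately show ?thesis using card_inj_on_le by blast
qed

lemma card_bag_le:
  assumes t: "t \<in> N"
  shows "card (bag t) \<le> card (X t) + card (X (parent t)) + 2 * cross E N F X t
    + cross E N F X (parent t)"
proof -
  have XV: "X s \<subseteq> V" if "s \<in> N" for s using decomp that unfolding tree_cut_decomp_def by blast
  have crossing_E: "crossing s \<subseteq> E" for s unfolding crossing_def by (rule Collect_restrict)
  have "\<Union>(crossing t) \<subseteq> V" using graph_edges_subset_Pow[OF graph] crossing_E by blast
  then have "finite (\<Union>(crossing t))" "finite (outside_neighbours t)"
    using finite_vertices finite_subset unfolding outside_neighbours_def by auto
  moreover have "finite (X t)" "finite (X (parent t))"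
    using XV t parent_in_nodes finite_vertices finite_subset by blast+
  ultimately have
    "card (bag t) \<le> card (X t \<union> \<Union>(crossing t) \<union> X (parent t) \<union> outside_neighbours t)"
    using bag_subset[OF t] by (intro card_mono) auto
  also have "\<dots> \<le> card (X t) + card (\<Union>(crossing t)) + card (X (parent t))
      + card (outside_neighbours t)"
    by (meson add_mono card_Un_le le_refl order_trans)
  also have "\<dots> \<le> card (X t) + card (X (parent t)) + 2 * cross E N F X t
      + cross E N F X (parent t)"
    using card_Union_graph_edges_le[OF graph crossing_E, of t] card_outside_neighbours_le[of t]
    unfolding cross_def crossing_def[symmetric] by linarith
  finally show ?thesis .
qed

end

lemma treewidth_le_width:
  assumes "tree_decomp V E N F B"
  shows "treewidth V E \<le> td_width N B"
  unfolding treewidth_def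
proof (rule cInf_lower)
  show "bdd_below {td_width N B |N F (B :: nat \<Rightarrow> 'a set). tree_decomp V E N F B}"
    by (rule bdd_belowI[of _ "-1"]) (auto simp: td_width_def)
qed (use assms in blast)

lemma treewidth_le_tree_cut_decomp:
  assumes g: "graph V E" and decomp: "tree_cut_decomp V E N F X"
  shows "treewidth V E \<le> int (2 * thickness N X + 3 * crossing_number E N F X) - 1"
proof -
  obtain r where "r \<in> N" using decomp unfolding tree_cut_decomp_def is_tree_def by blast
  then interpret rooted_tree_cut N F r V E X
    using assms by unfold_locales (auto simp: tree_cut_decomp_def)
  have "card (bag t) \<le> 2 * thickness N X + 3 * crossing_number E N F X" if t: "t \<in> N" for t
  proof -
    have "card (X s) \<le> thickness N X" "cross E N F X s \<le> crossing_number E N F X" if "s \<in> N" for s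
      using that finite_nodes unfolding thickness_def crossing_number_def by simp_all
    from this[OF t] this[OF parent_in_nodes[OF t]] show ?thesis using card_bag_le[OF t] by linarith
  qed
  then have "Max ((\<lambda>t. card (bag t)) ` N) \<le> 2 * thickness N X + 3 * crossing_number E N F X"
    using finite_nodes root_in_nodes by (subst Max_le_iff) auto
  then have "td_width N bag \<le> int (2 * thickness N X + 3 * crossing_number E N F X) - 1"
    unfolding td_width_def by simp
  then show ?thesis using treewidth_le_width[OF tree_decomp_bags] by simp
qed

text \<open>A star whose leaves carry one vertex each and whose centre carries none.\<close>
lemma tree_cut_decomp_thickness_le_1:
  assumes "graph V E"
  shows "\<exists>N F X. tree_cut_decomp V E N F X \<and> thickness N X \<le> 1"
proof -
  define n where "n = card V"
  obtain h where h: "bij_betw h {1..n} V"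
    using ex_bij_betw_nat_finite_1 assms unfolding graph_def n_def by blast
  define N where "N = {0..n}"
  define F where "F = (\<lambda>i. {0, i}) ` {1..n}"
  define X where "X i = (if i = 0 then {} else {h i})" for i
  have "graph N F" unfolding graph_def N_def F_def by fastforce
  moreover have "connected_in F N"
  proof (rule connected_in_descent[where a = 0 and \<mu> = id])
    fix t assume "t \<in> N" "t \<noteq> 0"
    then have "{0, t} \<in> F" unfolding F_def N_def by simp
    then have "{t, 0} \<in> F" by (simp add: insert_commute)
    then show "\<exists>t'\<in>N. {t, t'} \<in> F \<and> id t' < id t" using \<open>t \<noteq> 0\<close> by (auto simp: N_def)
  qed (simp add: N_def)
  moreover have "card F = card N - 1"
  proof -
    have "inj_on (\<lambda>i. {0, i}) {1..n}" by (rule inj_onI) (auto simp: doubleton_eq_iff)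
    then show ?thesis unfolding F_def N_def by (simp add: card_image)
  qed
  ultimately have "is_tree N F" unfolding is_tree_def N_def by simp
  moreover have "\<forall>s\<in>N. \<forall>t\<in>N. s \<noteq> t \<longrightarrow> X s \<inter> X t = {}"
    using inj_on_eq_iff[OF bij_betw_imp_inj_on[OF h]] by (auto simp: X_def N_def)
  moreover have "(\<Union>t\<in>N. X t) = V"
    using bij_betw_imp_surj_on[OF h] by (auto simp: X_def N_def)
  moreover have "thickness N X \<le> 1"
    unfolding thickness_def N_def X_def by (subst Max_le_iff) auto
  ultimately show ?thesis unfolding tree_cut_decomp_def by blast
qed

theorem lemma3p1:
  fixes V :: "'a set" and E :: "'a set set" and \<alpha> :: nat
  assumes "graph V E" and "\<alpha> > 0"
  shows "treewidth V E \<le> 5 * int (ecrw V E) - 1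
       \<and> treewidth V E \<le> 3 * int (ecrw_alpha \<alpha> V E) + 2 * int \<alpha> - 1"
proof -
  obtain N0 F0 X0 where d0: "tree_cut_decomp V E N0 F0 X0" "thickness N0 X0 \<le> 1"
    using tree_cut_decomp_thickness_le_1[OF assms(1)] by blast
  have "ecrw V E \<in> {max (crossing_number E N F X) (thickness N X) | N F X.
      tree_cut_decomp V E N F X}"
    unfolding ecrw_def by (rule Inf_nat_def1) (use d0 in blast)
  then obtain N F X where "tree_cut_decomp V E N F X"
    and "ecrw V E = max (crossing_number E N F X) (thickness N X)" by blast
  then have "treewidth V E \<le> 5 * int (ecrw V E) - 1"
    using treewidth_le_tree_cut_decomp[OF assms(1)] by fastforce
  moreover have "ecrw_alpha \<alpha> V E \<in> {crossing_number E N F X | N F X.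
      tree_cut_decomp V E N F X \<and> thickness N X \<le> \<alpha>}"
    unfolding ecrw_alpha_def by (rule Inf_nat_def1) (use d0 assms(2) in fastforce)
  then obtain N' F' X' where "tree_cut_decomp V E N' F' X'" and "thickness N' X' \<le> \<alpha>"
    and "ecrw_alpha \<alpha> V E = crossing_number E N' F' X'" by blast
  then have "treewidth V E \<le> 3 * int (ecrw_alpha \<alpha> V E) + 2 * int \<alpha> - 1"
    using treewidth_le_tree_cut_decomp[OF assms(1)] by fastforce
  ultimately show ?thesis ..
qed

end
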